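(* Let $G$ and $H$ be finite AC-groups with $|G|=|H|$. Then $A_G(t)=A_H(t)$ if and only if $B_G(t)=B_H(t)$.
   Context: A finite group $G$ is an AC-group if the centralizer of every non-central element is abelian. For a finite group $G$ and $n\ge 0$, $G$ acts on $G^n$ by simultaneous conjugation. Let $G^{(n)}\subseteq G^n$ be the set of $n$-tuples of pairwise commuting elements. Let $\alpha_{G,n}$ (resp. $\beta_{G,n}$) be the number of $G$-orbits on $G^n$ (resp. on $G^{(n)}$), and set $A_G(t)=\sum_{n\ge0}\alpha_{G,n}t^n$, $B_G(t)=\sum_{n\ge0}\beta_{G,n}t^n$. *)

theory Defs
  imports "HOL-Algebra.Group" "HOL-Library.FuncSet" "HOL-Computational_Algebra.Formal_Power_Series"
begin

definition grp_center :: "('a, 'b) monoid_scheme \<Rightarrow> 'a set" where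
  "grp_center G = {z \<in> carrier G. \<forall>x \<in> carrier G. z \<otimes>\<^bsub>G\<^esub> x = x \<otimes>\<^bsub>G\<^esub> z}"

definition grp_centralizer :: "('a, 'b) monoid_scheme \<Rightarrow> 'a \<Rightarrow> 'a set" where
  "grp_centralizer G a = {x \<in> carrier G. x \<otimes>\<^bsub>G\<^esub> a = a \<otimes>\<^bsub>G\<^esub> x}"

definition AC_group :: "('a, 'b) monoid_scheme \<Rightarrow> bool" where
  "AC_group G \<longleftrightarrow> group G \<and>
     (\<forall>a \<in> carrier G. a \<notin> grp_center G \<longrightarrow>
        (\<forall>x \<in> grp_centralizer G a. \<forall>y \<in> grp_centralizer G a.
            x \<otimes>\<^bsub>G\<^esub> y = y \<otimes>\<^bsub>G\<^esub> x))"

definition tuples :: "('a, 'b) monoid_scheme \<Rightarrow> nat \<Rightarrow> (nat \<Rightarrow> 'a) set" where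
  "tuples G n = {0..<n} \<rightarrow>\<^sub>E carrier G"

definition comm_tuples :: "('a, 'b) monoid_scheme \<Rightarrow> nat \<Rightarrow> (nat \<Rightarrow> 'a) set" where
  "comm_tuples G n = {x \<in> tuples G n. \<forall>i<n. \<forall>j<n. x i \<otimes>\<^bsub>G\<^esub> x j = x j \<otimes>\<^bsub>G\<^esub> x i}"

definition sconj :: "('a, 'b) monoid_scheme \<Rightarrow> nat \<Rightarrow> 'a \<Rightarrow> (nat \<Rightarrow> 'a) \<Rightarrow> (nat \<Rightarrow> 'a)" where
  "sconj G n g x = (\<lambda>i\<in>{0..<n}. g \<otimes>\<^bsub>G\<^esub> x i \<otimes>\<^bsub>G\<^esub> inv\<^bsub>G\<^esub> g)"

definition sconj_orbit :: "('a, 'b) monoid_scheme \<Rightarrow> nat \<Rightarrow> (nat \<Rightarrow> 'a) \<Rightarrow> (nat \<Rightarrow> 'a) set" where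
  "sconj_orbit G n x = (\<lambda>g. sconj G n g x) ` carrier G"

definition num_orbits :: "('a, 'b) monoid_scheme \<Rightarrow> nat \<Rightarrow> (nat \<Rightarrow> 'a) set \<Rightarrow> nat" where
  "num_orbits G n X = card (sconj_orbit G n ` X)"

definition alpha :: "('a, 'b) monoid_scheme \<Rightarrow> nat \<Rightarrow> nat" where
  "alpha G n = num_orbits G n (tuples G n)"

definition beta :: "('a, 'b) monoid_scheme \<Rightarrow> nat \<Rightarrow> nat" where
  "beta G n = num_orbits G n (comm_tuples G n)"

definition A_series :: "('a, 'b) monoid_scheme \<Rightarrow> int fps" where
  "A_series G = Abs_fps (\<lambda>n. int (alpha G n))"

definition B_series :: "('a, 'b) monoid_scheme \<Rightarrow> int fps" where
  "B_series G = Abs_fps (\<lambda>n. int (beta G n))"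

end

theory Submission
  imports Defs "HOL-Algebra.Group_Action"
begin

(* By Burnside's lemma |G| alpha_n = sum_g |C(g)|^n = z |G|^n + p_n and |G| beta_n = c_(n+1),
   where z = |Z(G)|, p_n is the sum of |C(g)|^n over the noncentral g, and c_n = |G^(n)|.
   Splitting a commuting tuple into its last entry g and the rest, a commuting tuple in C(g),
   and using that C(g) is abelian for noncentral g, gives c_(n+1) = z c_n + p_n.
   So alpha and beta each determine, and are determined by, the pair (z, p):
   for alpha, z is the coefficient of |G|^n since every |C(g)| < |G|; for beta,
   c_n = (1 - K) z^n + sum_g |C(g)|^n / (|C(g)| - z) with K = sum_g 1 / (|C(g)| - z), and K > 1
   unless G is abelian, so z is the smallest base occurring in c. Coefficients of such
   exponential sums are unique because the term with the largest base dominates. *)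

lemma power_sum_coeffs_zero:
  fixes w :: "nat \<Rightarrow> real"
  assumes "\<And>n. (\<Sum>e\<le>N. w e * real e ^ n) = 0"
  shows "\<forall>e\<le>N. w e = 0"
  using assms
proof (induction N)
  case 0
  then show ?case using "0.prems"[of 0] by simp
next
  case (Suc N)
  define M where "M = Suc N"
  \<comment> \<open>Dividing by the largest base, all other terms tend to 0.\<close>
  have scaled: "(\<Sum>e\<le>N. w e * (real e / real M) ^ n) + w M = 0" for n
  proof -
    have "(\<Sum>e\<le>M. w e * (real e / real M) ^ n) = (\<Sum>e\<le>M. w e * real e ^ n) / real M ^ n"
      by (simp add: sum_divide_distrib power_divide)
    also have "\<dots> = 0" using Suc.prems[of n] unfolding M_def by simp
    finally show ?thesis unfolding M_def by simp
  qed
  have "(\<lambda>n. w e * (real e / real M) ^ n) \<longlonglongrightarrow> 0" if "e \<le> N" for e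
    using that by (intro tendsto_mult_right_zero LIMSEQ_power_zero) (simp add: M_def)
  then have "(\<lambda>n. (\<Sum>e\<le>N. w e * (real e / real M) ^ n) + w M) \<longlonglongrightarrow> 0 + w M"
    by (intro tendsto_add tendsto_null_sum tendsto_const) auto
  moreover have "(\<lambda>n. (\<Sum>e\<le>N. w e * (real e / real M) ^ n) + w M) \<longlonglongrightarrow> 0"
    unfolding scaled by (rule tendsto_const)
  ultimately have top: "w M = 0"
    using LIMSEQ_unique by force
  then have "\<And>n. (\<Sum>e\<le>N. w e * real e ^ n) = 0"
    using Suc.prems unfolding M_def by simp
  then have "\<forall>e\<le>N. w e = 0" by (rule Suc.IH)
  with top show ?case by (auto simp: M_def le_Suc_eq)
qed

lemma power_sum_coeffs_unique:
  fixes u v :: "nat \<Rightarrow> real"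
  assumes "\<And>n. (\<Sum>e\<le>N. u e * real e ^ n) = (\<Sum>e\<le>N. v e * real e ^ n)"
  shows "\<forall>e\<le>N. u e = v e"
proof -
  have "\<forall>e\<le>N. u e - v e = 0"
    using assms by (intro power_sum_coeffs_zero) (simp add: left_diff_distrib sum_subtractf)
  then show ?thesis by simp
qed

lemma sum_power_group_by_value:
  fixes w :: "'i \<Rightarrow> real"
  assumes "finite I" "\<And>i. i \<in> I \<Longrightarrow> d i \<le> N"
  shows "(\<Sum>i\<in>I. w i * real (d i) ^ n) = (\<Sum>e\<le>N. (\<Sum>i | i \<in> I \<and> d i = e. w i) * real e ^ n)"
proof -
  have "(\<Sum>i\<in>I. w i * real (d i) ^ n) = (\<Sum>e\<le>N. \<Sum>i | i \<in> I \<and> d i = e. w i * real (d i) ^ n)"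
    using assms by (intro sum.group[symmetric]) auto
  also have "\<dots> = (\<Sum>e\<le>N. (\<Sum>i | i \<in> I \<and> d i = e. w i) * real e ^ n)"
    by (intro sum.cong refl) (auto simp: sum_distrib_right)
  finally show ?thesis .
qed

(* The data of a finite AC-group: N = |G|, z = |Z(G)|, I = G - Z(G), d g = |C(g)|,
   a = alpha, b = beta and c n = |G^(n)|. *)
locale ac_counts =
  fixes N z :: nat and I :: "'i set" and d :: "'i \<Rightarrow> nat" and a b c :: "nat \<Rightarrow> nat"
  assumes finite_I: "finite I"
    and N_pos: "0 < N"
    and z_le_N: "z \<le> N"
    and z_less_d: "i \<in> I \<Longrightarrow> z < d i"
    and d_less_N: "i \<in> I \<Longrightarrow> d i < N"
    and a_eq: "N * a n = z * N ^ n + (\<Sum>i\<in>I. d i ^ n)"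
    and b_eq: "N * b n = z * c n + (\<Sum>i\<in>I. d i ^ n)"
    and c_0: "c 0 = 1"
    and c_Suc: "c (Suc n) = N * b n"
    and weight_sum_ne_1: "(\<Sum>i\<in>I. 1 / (real (d i) - real z)) \<noteq> 1"
begin

definition a_coeff :: "nat \<Rightarrow> real" where
  "a_coeff e = (if e = N then real z else 0) + real (card {i \<in> I. d i = e})"

definition weight_sum :: real where
  "weight_sum = (\<Sum>i\<in>I. 1 / (real (d i) - real z))"

definition c_coeff :: "nat \<Rightarrow> real" where
  "c_coeff e = (if e = z then 1 - weight_sum else 0) + (\<Sum>i | i \<in> I \<and> d i = e. 1 / (real (d i) - real z))"

lemma d_le_N: "i \<in> I \<Longrightarrow> d i \<le> N"
  using d_less_N by (simp add: less_imp_le)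

lemma a_power_sum: "real (N * a n) = (\<Sum>e\<le>N. a_coeff e * real e ^ n)"
proof -
  have "real (N * a n) = real z * real N ^ n + (\<Sum>i\<in>I. 1 * real (d i) ^ n)"
    by (simp add: a_eq)
  also have "(\<Sum>i\<in>I. 1 * real (d i) ^ n) = (\<Sum>e\<le>N. real (card {i \<in> I. d i = e}) * real e ^ n)"
    using sum_power_group_by_value[OF finite_I d_le_N, where w = "\<lambda>_. 1"] by simp
  also have "real z * real N ^ n = (\<Sum>e\<le>N. (if e = N then real z else 0) * real e ^ n)"
    by (simp add: if_distrib[of "\<lambda>y. y * _"] cong: if_cong)
  finally show ?thesis by (simp add: a_coeff_def sum.distrib distrib_right)
qed

lemma a_coeff_N: "a_coeff N = real z"
proof -
  have no_d_N: "{i \<in> I. d i = N} = {}"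
    using d_less_N by force
  show ?thesis by (simp only: a_coeff_def no_d_N card.empty) simp
qed

lemma c_Suc_eq: "c (Suc n) = z * c n + (\<Sum>i\<in>I. d i ^ n)"
  by (simp add: c_Suc b_eq)

lemma c_closed_form:
  "real (c n) = (1 - weight_sum) * real z ^ n + (\<Sum>i\<in>I. 1 / (real (d i) - real z) * real (d i) ^ n)"
proof (induction n)
  case 0
  then show ?case by (simp add: c_0 weight_sum_def)
next
  case (Suc n)
  have step: "real z * (1 / (real (d i) - real z) * real (d i) ^ n) + real (d i) ^ n
      = 1 / (real (d i) - real z) * real (d i) ^ Suc n" if "i \<in> I" for i
    using z_less_d[OF that] by (simp add: field_simps)
  have "real (c (Suc n)) = real z * real (c n) + (\<Sum>i\<in>I. real (d i) ^ n)"
    by (simp add: c_Suc_eq)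
  also have "\<dots> = (1 - weight_sum) * real z ^ Suc n
      + (\<Sum>i\<in>I. real z * (1 / (real (d i) - real z) * real (d i) ^ n) + real (d i) ^ n)"
    by (simp add: Suc.IH algebra_simps sum_distrib_left sum.distrib)
  also have "\<dots> = (1 - weight_sum) * real z ^ Suc n
      + (\<Sum>i\<in>I. 1 / (real (d i) - real z) * real (d i) ^ Suc n)"
    using step by simp
  finally show ?case .
qed

lemma c_power_sum: "real (c n) = (\<Sum>e\<le>N. c_coeff e * real e ^ n)"
proof -
  have "(\<Sum>i\<in>I. 1 / (real (d i) - real z) * real (d i) ^ n)
      = (\<Sum>e\<le>N. (\<Sum>i | i \<in> I \<and> d i = e. 1 / (real (d i) - real z)) * real e ^ n)"
    by (rule sum_power_group_by_value[OF finite_I d_le_N])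
  moreover have "(1 - weight_sum) * real z ^ n = (\<Sum>e\<le>N. (if e = z then 1 - weight_sum else 0) * real e ^ n)"
    using z_le_N by (simp add: if_distrib[of "\<lambda>y. y * _"] cong: if_cong)
  ultimately show ?thesis
    by (simp add: c_closed_form c_coeff_def sum.distrib distrib_right)
qed

lemma c_coeff_le_z:
  assumes "e \<le> z"
  shows "c_coeff e = (if e = z then 1 - weight_sum else 0)"
proof -
  have no_d_e: "{i. i \<in> I \<and> d i = e} = {}"
    using z_less_d assms by force
  show ?thesis by (simp only: c_coeff_def no_d_e sum.empty add_0_right)
qed

lemma c_coeff_z_ne_0: "c_coeff z \<noteq> 0"
  using c_coeff_le_z weight_sum_ne_1 by (simp add: weight_sum_def)

end

lemma ac_counts_a_eq_iff:
  assumes "ac_counts N z1 I1 d1 a1 b1 c1" and "ac_counts N z2 I2 d2 a2 b2 c2"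
  shows "a1 = a2 \<longleftrightarrow> z1 = z2 \<and> (\<forall>n. (\<Sum>i\<in>I1. d1 i ^ n) = (\<Sum>i\<in>I2. d2 i ^ n))"
proof -
  interpret A1: ac_counts N z1 I1 d1 a1 b1 c1 by fact
  interpret A2: ac_counts N z2 I2 d2 a2 b2 c2 by fact
  show ?thesis
  proof
    assume "a1 = a2"
    then have "\<forall>e\<le>N. A1.a_coeff e = A2.a_coeff e"
      by (intro power_sum_coeffs_unique) (simp flip: A1.a_power_sum A2.a_power_sum)
    then have "z1 = z2"
      using A1.a_coeff_N A2.a_coeff_N by simp
    with \<open>a1 = a2\<close> show "z1 = z2 \<and> (\<forall>n. (\<Sum>i\<in>I1. d1 i ^ n) = (\<Sum>i\<in>I2. d2 i ^ n))"
      using A1.a_eq A2.a_eq by (metis add_left_cancel)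
  next
    assume "z1 = z2 \<and> (\<forall>n. (\<Sum>i\<in>I1. d1 i ^ n) = (\<Sum>i\<in>I2. d2 i ^ n))"
    then have "N * a1 n = N * a2 n" for n
      using A1.a_eq A2.a_eq by simp
    then show "a1 = a2"
      using A1.N_pos by auto
  qed
qed

lemma ac_counts_z_le_if_c_eq:
  assumes "ac_counts N z1 I1 d1 a1 b1 c1" and "ac_counts N z2 I2 d2 a2 b2 c2" and "c1 = c2"
  shows "z1 \<le> z2"
proof (rule ccontr)
  interpret A1: ac_counts N z1 I1 d1 a1 b1 c1 by fact
  interpret A2: ac_counts N z2 I2 d2 a2 b2 c2 by fact
  assume "\<not> z1 \<le> z2"
  have "\<forall>e\<le>N. A1.c_coeff e = A2.c_coeff e"
    using \<open>c1 = c2\<close> by (intro power_sum_coeffs_unique) (simp flip: A1.c_power_sum A2.c_power_sum)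
  then have "A1.c_coeff z2 = A2.c_coeff z2"
    using A2.z_le_N by simp
  moreover have "A1.c_coeff z2 = 0"
    using A1.c_coeff_le_z \<open>\<not> z1 \<le> z2\<close> by simp
  ultimately show False
    using A2.c_coeff_z_ne_0 by simp
qed

lemma ac_counts_b_eq_iff:
  assumes "ac_counts N z1 I1 d1 a1 b1 c1" and "ac_counts N z2 I2 d2 a2 b2 c2"
  shows "b1 = b2 \<longleftrightarrow> z1 = z2 \<and> (\<forall>n. (\<Sum>i\<in>I1. d1 i ^ n) = (\<Sum>i\<in>I2. d2 i ^ n))"
proof -
  interpret A1: ac_counts N z1 I1 d1 a1 b1 c1 by fact
  interpret A2: ac_counts N z2 I2 d2 a2 b2 c2 by fact
  show ?thesis
  proof
    assume "b1 = b2"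
    then have "c1 = c2"
    proof (intro ext)
      fix n show "c1 n = c2 n"
        using \<open>b1 = b2\<close> by (cases n) (simp_all add: A1.c_0 A2.c_0 A1.c_Suc A2.c_Suc)
    qed
    then have "z1 = z2"
      using ac_counts_z_le_if_c_eq assms by (metis order_antisym)
    with \<open>c1 = c2\<close> show "z1 = z2 \<and> (\<forall>n. (\<Sum>i\<in>I1. d1 i ^ n) = (\<Sum>i\<in>I2. d2 i ^ n))"
      using A1.c_Suc_eq A2.c_Suc_eq by (metis add_left_cancel)
  next
    assume same: "z1 = z2 \<and> (\<forall>n. (\<Sum>i\<in>I1. d1 i ^ n) = (\<Sum>i\<in>I2. d2 i ^ n))"
    have b_eq_if_c_eq: "b1 n = b2 n" if "c1 n = c2 n" for n
      using that same A1.b_eq A2.b_eq A1.N_pos by (metis mult_cancel_left not_less0)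
    have "c1 n = c2 n" for n
      by (induction n) (simp_all add: A1.c_0 A2.c_0 A1.c_Suc A2.c_Suc b_eq_if_c_eq)
    then show "b1 = b2"
      using b_eq_if_c_eq by auto
  qed
qed

lemma ac_counts_a_eq_iff_b_eq:
  assumes "ac_counts N z1 I1 d1 a1 b1 c1" and "ac_counts N z2 I2 d2 a2 b2 c2"
  shows "a1 = a2 \<longleftrightarrow> b1 = b2"
  using ac_counts_a_eq_iff[OF assms] ac_counts_b_eq_iff[OF assms] by simp

lemma card_tuples: "card (tuples G n) = card (carrier G) ^ n"
  by (simp add: tuples_def card_PiE)

lemma finite_comm_tuples: "finite (carrier G) \<Longrightarrow> finite (comm_tuples G n)"
  by (simp add: comm_tuples_def tuples_def finite_PiE)

lemma comm_tuples_0: "comm_tuples G 0 = {\<lambda>_. undefined}"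
  by (auto simp: comm_tuples_def tuples_def)

lemma comm_tuples_Suc:
  "comm_tuples G (Suc n) = (\<lambda>(a, x). x(n := a)) ` (SIGMA a:carrier G. comm_tuples (G\<lparr>carrier := grp_centralizer G a\<rparr>) n)"
proof (intro equalityI subsetI)
  fix x assume x: "x \<in> comm_tuples G (Suc n)"
  then have parts: "(x n, restrict x {0..<n}) \<in> (SIGMA a:carrier G. comm_tuples (G\<lparr>carrier := grp_centralizer G a\<rparr>) n)"
    by (auto simp: comm_tuples_def tuples_def grp_centralizer_def)
  moreover have "x = (restrict x {0..<n})(n := x n)"
    using x by (auto simp: comm_tuples_def tuples_def PiE_iff extensional_def)
  ultimately show "x \<in> (\<lambda>(a, x). x(n := a)) ` (SIGMA a:carrier G. comm_tuples (G\<lparr>carrier := grp_centralizer G a\<rparr>) n)"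
    by (intro rev_image_eqI[OF parts]) simp
next
  fix y assume "y \<in> (\<lambda>(a, x). x(n := a)) ` (SIGMA a:carrier G. comm_tuples (G\<lparr>carrier := grp_centralizer G a\<rparr>) n)"
  then show "y \<in> comm_tuples G (Suc n)"
    by (auto simp: comm_tuples_def tuples_def grp_centralizer_def PiE_iff extensional_def)
qed

lemma card_comm_tuples_Suc:
  assumes "finite (carrier G)"
  shows "card (comm_tuples G (Suc n))
    = (\<Sum>a\<in>carrier G. card (comm_tuples (G\<lparr>carrier := grp_centralizer G a\<rparr>) n))"
proof -
  let ?S = "SIGMA a:carrier G. comm_tuples (G\<lparr>carrier := grp_centralizer G a\<rparr>) n"
  have S_sub: "?S \<subseteq> carrier G \<times> ({0..<n} \<rightarrow>\<^sub>E carrier G)"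
    by (auto simp: comm_tuples_def tuples_def grp_centralizer_def)
  have "inj_on (\<lambda>(a, x). x(n := a)) ?S"
    using inj_combinator[of n "{0..<n}" "\<lambda>_. carrier G"] S_sub by (auto intro: inj_on_subset)
  then have "card (comm_tuples G (Suc n)) = card ?S"
    by (simp add: comm_tuples_Suc card_image)
  also have "\<dots> = (\<Sum>a\<in>carrier G. card (comm_tuples (G\<lparr>carrier := grp_centralizer G a\<rparr>) n))"
    using assms by (intro card_SigmaI ballI finite_comm_tuples) (simp_all add: grp_centralizer_def)
  finally show ?thesis .
qed

lemma grp_centralizer_subset: "grp_centralizer G a \<subseteq> carrier G"
  by (auto simp: grp_centralizer_def)

lemma grp_center_subset_centralizer: "a \<in> carrier G \<Longrightarrow> grp_center G \<subseteq> grp_centralizer G a"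
  by (auto simp: grp_center_def grp_centralizer_def)

lemma grp_centralizer_central: "g \<in> grp_center G \<Longrightarrow> grp_centralizer G g = carrier G"
  by (auto simp: grp_center_def grp_centralizer_def)

lemma card_center_less_card_centralizer:
  assumes "finite (carrier G)" and "g \<in> carrier G" and "g \<notin> grp_center G"
  shows "card (grp_center G) < card (grp_centralizer G g)"
proof -
  have "grp_center G \<subset> grp_centralizer G g"
    using assms grp_center_subset_centralizer[of g G] by (auto simp: grp_centralizer_def)
  then show ?thesis
    using assms(1) grp_centralizer_subset by (metis psubset_card_mono rev_finite_subset)
qed

lemma card_centralizer_less_card:
  assumes "finite (carrier G)" and "g \<in> carrier G" and "g \<notin> grp_center G"
  shows "card (grp_centralizer G g) < card (carrier G)"
proof -
  obtain x where "x \<in> carrier G" "x \<otimes>\<^bsub>G\<^esub> g \<noteq> g \<otimes>\<^bsub>G\<^esub> x"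
    using assms(2,3) by (auto simp: grp_center_def)
  then have "grp_centralizer G g \<noteq> carrier G"
    by (auto simp: grp_centralizer_def)
  with grp_centralizer_subset[of G g] have "grp_centralizer G g \<subset> carrier G"
    by (rule psubsetI)
  then show ?thesis
    using assms(1) by (rule psubset_card_mono[rotated])
qed

lemma sum_centralizers_split:
  fixes f :: "'a set \<Rightarrow> nat"
  assumes "finite (carrier G)"
  shows "(\<Sum>g\<in>carrier G. f (grp_centralizer G g))
    = card (grp_center G) * f (carrier G) + (\<Sum>g\<in>carrier G - grp_center G. f (grp_centralizer G g))"
proof -
  have "grp_center G \<subseteq> carrier G"
    by (auto simp: grp_center_def)
  from sum.subset_diff[OF this assms] have "(\<Sum>g\<in>carrier G. f (grp_centralizer G g))
    = (\<Sum>g\<in>carrier G - grp_center G. f (grp_centralizer G g)) + (\<Sum>g\<in>grp_center G. f (grp_centralizer G g))" .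
  then show ?thesis
    by (simp add: grp_centralizer_central)
qed

context group
begin

lemma conj_mult:
  assumes "g \<in> carrier G" and "a \<in> carrier G" and "b \<in> carrier G"
  shows "g \<otimes> a \<otimes> inv g \<otimes> (g \<otimes> b \<otimes> inv g) = g \<otimes> (a \<otimes> b) \<otimes> inv g"
  using assms by (simp add: m_assoc flip: m_assoc[of "inv g" g])

lemma conj_eq_iff_commute:
  assumes "g \<in> carrier G" and "a \<in> carrier G"
  shows "g \<otimes> a \<otimes> inv g = a \<longleftrightarrow> a \<otimes> g = g \<otimes> a"
  using assms by (metis inv_solve_right m_closed)

lemma sconj_in_tuples:
  assumes "g \<in> carrier G" and "x \<in> tuples G n"
  shows "sconj G n g x \<in> tuples G n"
  using assms by (auto simp: sconj_def tuples_def)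

lemma sconj_one:
  assumes "x \<in> tuples G n"
  shows "sconj G n \<one> x = x"
  using assms by (auto simp: sconj_def tuples_def PiE_iff extensional_def)

lemma sconj_mult:
  assumes "g \<in> carrier G" and "h \<in> carrier G" and "x \<in> tuples G n"
  shows "sconj G n (g \<otimes> h) x = sconj G n g (sconj G n h x)"
  using assms by (intro ext) (auto simp: sconj_def tuples_def PiE_iff m_assoc inv_mult_group)

lemma sconj_in_comm_tuples:
  assumes g: "g \<in> carrier G" and x: "x \<in> comm_tuples G n"
  shows "sconj G n g x \<in> comm_tuples G n"
proof -
  have "g \<otimes> x i \<otimes> inv g \<otimes> (g \<otimes> x j \<otimes> inv g) = g \<otimes> x j \<otimes> inv g \<otimes> (g \<otimes> x i \<otimes> inv g)"
    if "i < n" "j < n" for i j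
  proof -
    have "x i \<in> carrier G" "x j \<in> carrier G" "x i \<otimes> x j = x j \<otimes> x i"
      using x that by (auto simp: comm_tuples_def tuples_def)
    then show ?thesis
      using g by (simp add: conj_mult)
  qed
  then show ?thesis
    using x sconj_in_tuples[OF g] by (auto simp: comm_tuples_def sconj_def)
qed

lemma group_action_sconj:
  assumes X: "X \<subseteq> tuples G n" and stable: "\<And>g x. g \<in> carrier G \<Longrightarrow> x \<in> X \<Longrightarrow> sconj G n g x \<in> X"
  shows "group_action G X (\<lambda>g. restrict (sconj G n g) X)"
proof -
  have bij: "restrict (sconj G n g) X \<in> Bij X" if g: "g \<in> carrier G" for g
  proof -
    have "bij_betw (sconj G n g) X X"
    proof (rule bij_betwI[where g = "sconj G n (inv g)"])
      show "sconj G n g \<in> X \<rightarrow> X" and "sconj G n (inv g) \<in> X \<rightarrow> X"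
        using stable g by auto
      fix x assume "x \<in> X"
      then have "x \<in> tuples G n" using X by auto
      then show "sconj G n (inv g) (sconj G n g x) = x" and "sconj G n g (sconj G n (inv g) x) = x"
        using g by (simp_all flip: sconj_mult add: sconj_one)
    qed
    then show ?thesis by (auto simp: Bij_def bij_betw_def)
  qed
  have "restrict (sconj G n (g \<otimes> h)) X = restrict (sconj G n g) X \<otimes>\<^bsub>BijGroup X\<^esub> restrict (sconj G n h) X"
    if "g \<in> carrier G" "h \<in> carrier G" for g h
    using bij that X stable by (auto simp: BijGroup_def compose_def sconj_mult intro!: ext)
  with bij show ?thesis
    unfolding group_action_def group_hom_def group_hom_axioms_def hom_def
    by (auto simp: group_BijGroup is_group) (simp add: BijGroup_def)
qed

lemma burnside_sconj:
  assumes "finite (carrier G)" and X: "X \<subseteq> tuples G n"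
    and stable: "\<And>g x. g \<in> carrier G \<Longrightarrow> x \<in> X \<Longrightarrow> sconj G n g x \<in> X"
  shows "card (carrier G) * num_orbits G n X = (\<Sum>g\<in>carrier G. card {x \<in> X. sconj G n g x = x})"
proof -
  interpret group_action G X "\<lambda>g. restrict (sconj G n g) X"
    using X stable by (rule group_action_sconj)
  have "finite X"
    using assms(1) X by (auto simp: tuples_def intro: finite_subset finite_PiE)
  moreover have "orbits G X (\<lambda>g. restrict (sconj G n g) X) = sconj_orbit G n ` X"
    by (auto simp: orbits_def orbit_def sconj_orbit_def)
  moreover have "invariants X (\<lambda>g. restrict (sconj G n g) X) g = {x \<in> X. sconj G n g x = x}" for g
    by (auto simp: invariants_def)
  ultimately show ?thesis
    using burnside[OF assms(1)] by (simp add: num_orbits_def order_def mult.commute)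
qed

lemma sconj_fixed_iff:
  assumes g: "g \<in> carrier G" and x: "x \<in> tuples G n"
  shows "sconj G n g x = x \<longleftrightarrow> (\<forall>i<n. x i \<otimes> g = g \<otimes> x i)"
proof -
  have "sconj G n g x = x \<longleftrightarrow> (\<forall>i<n. g \<otimes> x i \<otimes> inv g = x i)"
    using x by (auto simp: sconj_def tuples_def PiE_iff extensional_def fun_eq_iff)
  moreover have "g \<otimes> x i \<otimes> inv g = x i \<longleftrightarrow> x i \<otimes> g = g \<otimes> x i" if "i < n" for i
    using g x that by (intro conj_eq_iff_commute) (auto simp: tuples_def)
  ultimately show ?thesis by auto
qed

lemma sconj_fixed_tuples:
  assumes "g \<in> carrier G"
  shows "{x \<in> tuples G n. sconj G n g x = x} = tuples (G\<lparr>carrier := grp_centralizer G g\<rparr>) n"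
proof -
  have "tuples (G\<lparr>carrier := grp_centralizer G g\<rparr>) n = {x \<in> tuples G n. \<forall>i<n. x i \<otimes> g = g \<otimes> x i}"
    by (auto simp: tuples_def grp_centralizer_def PiE_iff extensional_def)
  with sconj_fixed_iff[OF assms] show ?thesis by auto
qed

lemma sconj_fixed_comm_tuples:
  assumes "g \<in> carrier G"
  shows "{x \<in> comm_tuples G n. sconj G n g x = x} = comm_tuples (G\<lparr>carrier := grp_centralizer G g\<rparr>) n"
proof -
  have "comm_tuples (G\<lparr>carrier := grp_centralizer G g\<rparr>) n
      = {x \<in> comm_tuples G n. \<forall>i<n. x i \<otimes> g = g \<otimes> x i}"
    by (auto simp: comm_tuples_def tuples_def grp_centralizer_def PiE_iff)
  with sconj_fixed_iff[OF assms] show ?thesis by (auto simp: comm_tuples_def)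
qed

lemma card_mult_alpha:
  assumes "finite (carrier G)"
  shows "card (carrier G) * alpha G n = (\<Sum>g\<in>carrier G. card (grp_centralizer G g) ^ n)"
  using burnside_sconj[OF assms subset_refl sconj_in_tuples]
  by (simp add: alpha_def sconj_fixed_tuples card_tuples)

lemma card_mult_beta:
  assumes "finite (carrier G)"
  shows "card (carrier G) * beta G n = card (comm_tuples G (Suc n))"
proof -
  have "comm_tuples G n \<subseteq> tuples G n"
    by (auto simp: comm_tuples_def)
  from burnside_sconj[OF assms this sconj_in_comm_tuples] show ?thesis
    by (simp add: beta_def sconj_fixed_comm_tuples card_comm_tuples_Suc[OF assms])
qed

end

lemma AC_group_centralizer_eq:
  assumes AC: "AC_group G" and g: "g \<in> carrier G" "g \<notin> grp_center G"
    and h: "h \<in> grp_centralizer G g" "h \<notin> grp_center G"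
  shows "grp_centralizer G h = grp_centralizer G g"
proof -
  have "h \<in> carrier G" and "g \<in> grp_centralizer G h"
    using h g by (auto simp: grp_centralizer_def)
  then show ?thesis
    using AC g h unfolding AC_group_def grp_centralizer_def by blast
qed

lemma AC_group_comm_tuples_centralizer:
  assumes "AC_group G" and "g \<in> carrier G" and "g \<notin> grp_center G"
  shows "comm_tuples (G\<lparr>carrier := grp_centralizer G g\<rparr>) n = tuples (G\<lparr>carrier := grp_centralizer G g\<rparr>) n"
  using assms unfolding AC_group_def by (auto simp: comm_tuples_def tuples_def PiE_iff extensional_def)

lemma AC_group_weight_sum_gt_1:
  assumes AC: "AC_group G" and fin: "finite (carrier G)"
    and g0: "g0 \<in> carrier G" "g0 \<notin> grp_center G"
  shows "(\<Sum>g\<in>carrier G - grp_center G.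
      1 / (real (card (grp_centralizer G g)) - real (card (grp_center G)))) > 1"
proof -
  let ?Z = "grp_center G" and ?C = "grp_centralizer G g0"
  let ?w = "\<lambda>g. 1 / (real (card (grp_centralizer G g)) - real (card ?Z))"
  have C_sub: "?C \<subseteq> carrier G" and Z_sub: "?Z \<subseteq> ?C"
    by (rule grp_centralizer_subset, rule grp_center_subset_centralizer[OF g0(1)])
  have fin_C: "finite ?C"
    using fin C_sub by (rule finite_subset[rotated])
  have w_pos: "?w g > 0" if "g \<in> carrier G - ?Z" for g
    using card_center_less_card_centralizer[OF fin] that by simp
  \<comment> \<open>The noncentral elements of \<open>?C\<close> all have centralizer \<open>?C\<close>, so together they contribute exactly 1.\<close>
  have "sum ?w (?C - ?Z) = sum (\<lambda>_. 1 / (real (card ?C) - real (card ?Z))) (?C - ?Z)"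
    using AC_group_centralizer_eq[OF AC g0] by (intro sum.cong) auto
  also have "\<dots> = 1"
    using card_center_less_card_centralizer[OF fin g0] card_Diff_subset[OF finite_subset[OF Z_sub fin_C] Z_sub]
    by (simp add: of_nat_diff)
  finally have inner: "sum ?w (?C - ?Z) = 1" .
  have "carrier G - ?C \<noteq> {}"
    using card_centralizer_less_card[OF fin g0] C_sub by auto
  then have outer: "sum ?w (carrier G - ?C) > 0"
    using fin w_pos Z_sub by (intro sum_pos) auto
  have "carrier G - ?Z = (?C - ?Z) \<union> (carrier G - ?C)"
    using C_sub Z_sub by blast
  then have "sum ?w (carrier G - ?Z) = sum ?w (?C - ?Z) + sum ?w (carrier G - ?C)"
    using fin fin_C by (simp add: sum.union_disjoint Diff_Int_distrib2)
  with inner outer show ?thesis by simp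
qed

lemma AC_group_card_comm_tuples_Suc:
  assumes AC: "AC_group G" and fin: "finite (carrier G)"
  shows "card (comm_tuples G (Suc n)) = card (grp_center G) * card (comm_tuples G n)
    + (\<Sum>g\<in>carrier G - grp_center G. card (grp_centralizer G g) ^ n)"
proof -
  have "card (comm_tuples G (Suc n))
      = (\<Sum>g\<in>carrier G. card (comm_tuples (G\<lparr>carrier := grp_centralizer G g\<rparr>) n))"
    by (rule card_comm_tuples_Suc[OF fin])
  also have "\<dots> = card (grp_center G) * card (comm_tuples (G\<lparr>carrier := carrier G\<rparr>) n)
      + (\<Sum>g\<in>carrier G - grp_center G. card (comm_tuples (G\<lparr>carrier := grp_centralizer G g\<rparr>) n))"
    by (rule sum_centralizers_split[OF fin, where f = "\<lambda>K. card (comm_tuples (G\<lparr>carrier := K\<rparr>) n)"])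
  also have "\<dots> = card (grp_center G) * card (comm_tuples G n)
      + (\<Sum>g\<in>carrier G - grp_center G. card (grp_centralizer G g) ^ n)"
    using AC_group_comm_tuples_centralizer[OF AC] by (simp add: comm_tuples_def tuples_def card_PiE)
  finally show ?thesis .
qed

lemma ac_counts_of_AC_group:
  assumes AC: "AC_group G" and fin: "finite (carrier G)"
  shows "ac_counts (card (carrier G)) (card (grp_center G)) (carrier G - grp_center G)
    (\<lambda>g. card (grp_centralizer G g)) (alpha G) (beta G) (\<lambda>n. card (comm_tuples G n))"
proof -
  interpret group G
    using AC by (simp add: AC_group_def)
  let ?Z = "grp_center G"
  show ?thesis
  proof unfold_locales
    show "0 < card (carrier G)"
      using fin by (auto simp: card_gt_0_iff)
    show "card ?Z \<le> card (carrier G)"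
      using fin by (intro card_mono) (auto simp: grp_center_def)
    show "card (grp_center G) < card (grp_centralizer G g)" "card (grp_centralizer G g) < card (carrier G)"
      if "g \<in> carrier G - ?Z" for g
      using that card_center_less_card_centralizer[OF fin] card_centralizer_less_card[OF fin] by auto
    show "card (carrier G) * alpha G n = card ?Z * card (carrier G) ^ n
        + (\<Sum>g\<in>carrier G - ?Z. card (grp_centralizer G g) ^ n)" for n
      using card_mult_alpha[OF fin] sum_centralizers_split[OF fin, where f = "\<lambda>K. card K ^ n"] by simp
    show "card (carrier G) * beta G n = card ?Z * card (comm_tuples G n)
        + (\<Sum>g\<in>carrier G - ?Z. card (grp_centralizer G g) ^ n)" for n
      using card_mult_beta[OF fin] AC_group_card_comm_tuples_Suc[OF AC fin] by simp
    show "card (comm_tuples G 0) = 1"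
      by (simp add: comm_tuples_0)
    show "card (comm_tuples G (Suc n)) = card (carrier G) * beta G n" for n
      by (simp add: card_mult_beta[OF fin])
    show "(\<Sum>g\<in>carrier G - ?Z. 1 / (real (card (grp_centralizer G g)) - real (card ?Z))) \<noteq> 1"
    proof (cases "carrier G - ?Z = {}")
      case True
      show ?thesis unfolding True by simp
    next
      case False
      then show ?thesis
        using AC_group_weight_sum_gt_1[OF AC fin] by force
    qed
  qed (use fin in simp)
qed

theorem theorem6p5:
  fixes G :: "('a, 'b) monoid_scheme" and H :: "('c, 'd) monoid_scheme"
  assumes "group G" and "group H"
    and "finite (carrier G)" and "finite (carrier H)"
    and "AC_group G" and "AC_group H"
    and "card (carrier G) = card (carrier H)"
  shows "A_series G = A_series H \<longleftrightarrow> B_series G = B_series H"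
proof -
  have "alpha G = alpha H \<longleftrightarrow> beta G = beta H"
    using ac_counts_of_AC_group[OF assms(5,3)] ac_counts_of_AC_group[OF assms(6,4)] assms(7)
    by (intro ac_counts_a_eq_iff_b_eq) simp_all
  then show ?thesis
    by (simp add: A_series_def B_series_def fps_eq_iff fun_eq_iff)
qed

end
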